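(* Let $a,b\in\mathbb{C}$ and let $m,n\ge 0$ be integers. Define $S_n(a,b,m)=\sum_{k=0}^n\binom{n}{k}a^kb^{n-k}H_k(m)$. Then $$S_n(a,b,m)=\sum_{j=0}^m\binom{m}{j}\sum_{k=0}^n H_k(j)\,(a+b)^k\,\frac{(m-j)!}{(n-k)!}\,(-1)^{n-k}\,b^{n-k}\,s(n-k,m-j).$$
   Context: For integers $m\ge 1$, $n\ge 0$, the multiple harmonic-like numbers are $H_n(m)=\sum_{1\le k_1+k_2+\cdots+k_m\le n}\frac{1}{k_1k_2\cdots k_m}$ (sum over positive integers $k_1,\dots,k_m$), with $H_n(0)=1$ for $n\ge 0$ and $H_0(m)=0$ for $m\ge1$. Equivalently, $\sum_{n\ge0}H_n(m)z^n=\frac{(-\ln(1-z))^m}{1-z}$. The (signed) Stirling numbers of the first kind $s(n,k)$ are defined by $\sum_{n\ge k}s(n,k)\frac{z^n}{n!}=\frac{\ln^k(1+z)}{k!}$, with $s(n,k)=0$ for $n<k$. Convention $0^0=1$. *)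

theory Defs
  imports "HOL-Analysis.Analysis" "HOL-Combinatorics.Stirling" "HOL-Library.FuncSet"
begin

text \<open>Tuples are represented as extensional functions on {0..<m} with values in {1..n}
  (each k_i <= n is forced by positivity and the sum bound). For m = 0 the only tuple is
  the empty one, giving H_n(0) = 1; for m >= 1 and n = 0 the sum is empty, giving 0.\<close>
definition H :: "nat \<Rightarrow> nat \<Rightarrow> complex" where
  "H n m = (\<Sum>k \<in> {k \<in> {0..<m} \<rightarrow>\<^sub>E {1..n}. (\<Sum>i<m. k i) \<le> n}.
              1 / (\<Prod>i<m. of_nat (k i)))"

text \<open>Signed Stirling numbers of the first kind, s(n,k) = (-1)^(n-k) [n k], where
  the library's stirling n k is the unsigned Stirling number of the first kind.\<close>
definition s1 :: "nat \<Rightarrow> nat \<Rightarrow> complex" where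
  "s1 n k = (-1) ^ (n - k) * of_nat (stirling n k)"

definition S :: "nat \<Rightarrow> complex \<Rightarrow> complex \<Rightarrow> nat \<Rightarrow> complex" where
  "S n a b m = (\<Sum>k=0..n. of_nat (n choose k) * a ^ k * b ^ (n - k) * H k m)"

end

theory Submission
  imports Defs "HOL-Computational_Algebra.Formal_Power_Series"
begin

text \<open>With \<open>L(z) = -ln(1 - z)\<close>, the numbers \<open>H\<^sub>n(m)\<close> have generating function
  \<open>L(z)\<^sup>m / (1 - z)\<close>, and the binomial transform \<open>S\<close> is the coefficient sequence of
  \<open>F(a z / (1 - b z)) / (1 - b z)\<close> for that function \<open>F\<close>. Since
  \<open>1 - a z / (1 - b z) = (1 - (a + b) z) / (1 - b z)\<close>, this series equals
  \<open>(L((a + b) z) - L(b z))\<^sup>m / (1 - (a + b) z)\<close>. Expanding the power binomially and using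
  \<open>L(z)\<^sup>r = r! \<Sum>\<^sub>i |s(i, r)| z\<^sup>i / i!\<close> gives the formula.\<close>

no_notation vec_nth (infixl \<open>$\<close> 90)
notation fps_nth (infixl \<open>$\<close> 75)

definition geom_fps :: "'a::comm_ring_1 \<Rightarrow> 'a fps" where
  "geom_fps c = Abs_fps (\<lambda>n. c ^ n)"

lemma geom_fps_nth [simp]: "geom_fps c $ n = c ^ n"
  by (simp add: geom_fps_def)

lemma geom_fps_times_one_minus: "geom_fps c * (1 - fps_const c * fps_X) = 1"
proof -
  have "geom_fps c * (1 - fps_const c * fps_X) = geom_fps c - fps_const c * (fps_X * geom_fps c)"
    by (simp add: algebra_simps)
  also have "\<dots> = 1"
    by (auto simp: fps_eq_iff) (metis Suc_pred power_Suc)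
  finally show ?thesis .
qed

lemma geom_fps_power_nth: "(geom_fps c ^ Suc i) $ k = of_nat ((k + i) choose i) * c ^ k"
proof (induction i arbitrary: k)
  case 0
  then show ?case by simp
next
  case (Suc i)
  have hockey_stick: "(\<Sum>j=0..k. (j + i) choose i) = (k + Suc i) choose Suc i"
    by (induction k) auto
  have "(geom_fps c ^ Suc (Suc i)) $ k = (\<Sum>j=0..k. c ^ j * (of_nat ((k - j + i) choose i) * c ^ (k - j)))"
    by (simp only: power_Suc[of "geom_fps c" "Suc i"] fps_mult_nth geom_fps_nth Suc.IH)
  also have "\<dots> = (\<Sum>j=0..k. of_nat ((k - j + i) choose i) * c ^ k)"
    by (intro sum.cong refl) (simp add: mult.left_commute[of "c ^ _"] flip: power_add)
  also have "\<dots> = of_nat (\<Sum>j=0..k. (k - j + i) choose i) * c ^ k"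
    by (simp add: sum_distrib_right)
  also have "(\<Sum>j=0..k. (k - j + i) choose i) = (\<Sum>j=0..k. (j + i) choose i)"
    by (rule sum.reindex_bij_witness[where i="\<lambda>j. k - j" and j="\<lambda>j. k - j"]) auto
  finally show ?case
    by (simp add: hockey_stick)
qed

lemma geom_fps_deriv: "fps_deriv (geom_fps c) = fps_const c * geom_fps c ^ 2"
proof (rule fps_ext)
  fix n
  have "(geom_fps c ^ Suc 1) $ n = of_nat (Suc n) * c ^ n"
    by (subst geom_fps_power_nth) simp
  then show "fps_deriv (geom_fps c) $ n = (fps_const c * geom_fps c ^ 2) $ n"
    by (simp add: numeral_2_eq_2 del: power_Suc) simp
qed

lemma geom_fps_compose_linear: "geom_fps 1 oo (fps_const c * fps_X) = geom_fps c"
  by (simp add: fps_compose_linear fps_eq_iff)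

definition neg_ln_fps :: "'a::field_char_0 fps" where
  "neg_ln_fps = Abs_fps (\<lambda>n. if n = 0 then 0 else 1 / of_nat n)"

lemma neg_ln_fps_nth_0 [simp]: "neg_ln_fps $ 0 = 0"
  by (simp add: neg_ln_fps_def)

lemma neg_ln_fps_deriv: "fps_deriv neg_ln_fps = geom_fps 1"
  by (simp add: fps_eq_iff neg_ln_fps_def del: of_nat_Suc)

text \<open>Coefficientwise form of \<open>(1 - z) (L\<^sup>r\<^sup>+\<^sup>1)' = (r + 1) L\<^sup>r\<close> for \<open>L = -ln(1 - z)\<close>.\<close>
lemma neg_ln_fps_power_recurrence:
  "of_nat (Suc i) * (neg_ln_fps ^ Suc r) $ Suc i
     = of_nat i * (neg_ln_fps ^ Suc r) $ i + of_nat (Suc r) * (neg_ln_fps ^ r) $ i"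
proof -
  define F :: "'a fps" where "F = neg_ln_fps ^ Suc r"
  have "fps_deriv F = fps_const (of_nat (Suc r)) * geom_fps 1 * neg_ln_fps ^ r"
    unfolding F_def fps_deriv_power neg_ln_fps_deriv by simp
  then have "fps_deriv F * (1 - fps_const 1 * fps_X)
      = fps_const (of_nat (Suc r)) * neg_ln_fps ^ r * (geom_fps 1 * (1 - fps_const 1 * fps_X))"
    by (simp add: algebra_simps)
  then have "fps_deriv F - fps_X * fps_deriv F = fps_const (of_nat (Suc r)) * neg_ln_fps ^ r"
    by (simp only: geom_fps_times_one_minus) (simp add: algebra_simps)
  then have "(fps_deriv F - fps_X * fps_deriv F) $ i = of_nat (Suc r) * (neg_ln_fps ^ r) $ i"
    by simp
  moreover have "(fps_X * fps_deriv F) $ i = of_nat i * F $ i"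
    by (cases i) (simp_all add: algebra_simps)
  ultimately have "of_nat (Suc i) * F $ Suc i - of_nat i * F $ i = of_nat (Suc r) * (neg_ln_fps ^ r) $ i"
    by (simp add: algebra_simps)
  then show ?thesis
    unfolding F_def by (simp add: algebra_simps del: power_Suc)
qed

lemma neg_ln_fps_power_nth: "(neg_ln_fps ^ r :: 'a::field_char_0 fps) $ i = fact r * of_nat (stirling i r) / fact i"
proof (induction r arbitrary: i)
  case 0
  then show ?case by (cases i) simp_all
next
  case (Suc r)
  note IH_r = Suc.IH
  show ?case
  proof (induction i)
    case 0
    then show ?case by simp
  next
    case (Suc i)
    have "of_nat (Suc i) * (neg_ln_fps ^ Suc r :: 'a fps) $ Suc i
        = of_nat i * (neg_ln_fps ^ Suc r) $ i + of_nat (Suc r) * (neg_ln_fps ^ r) $ i"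
      by (rule neg_ln_fps_power_recurrence)
    also have "\<dots> = of_nat i * (fact (Suc r) * of_nat (stirling i (Suc r)) / fact i)
          + of_nat (Suc r) * (fact r * of_nat (stirling i r) / fact i)"
      using Suc.IH IH_r[of i] by (simp del: power_Suc)
    also have "\<dots> = fact (Suc r) * of_nat (stirling (Suc i) (Suc r)) / fact i"
      by (simp add: field_simps)
    finally show ?case
      by (simp add: field_simps del: of_nat_Suc power_Suc)
  qed
qed

lemma neg_ln_fps_compose_linear_deriv:
  "fps_deriv (neg_ln_fps oo fps_const c * fps_X) = fps_const c * geom_fps c"
  by (subst fps_compose_deriv) (simp_all add: neg_ln_fps_deriv geom_fps_compose_linear)

definition euler_fps :: "'a::comm_ring_1 \<Rightarrow> 'a \<Rightarrow> 'a fps" where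
  "euler_fps a b = fps_const a * fps_X * geom_fps b"

lemma euler_fps_nth_0 [simp]: "euler_fps a b $ 0 = 0"
  by (simp add: euler_fps_def)

lemma euler_fps_power: "euler_fps a b ^ i = fps_X ^ i * (fps_const (a ^ i) * geom_fps b ^ i)"
  by (simp add: euler_fps_def power_mult_distrib fps_const_power algebra_simps)

lemma euler_transform_nth:
  "(geom_fps b * (h oo euler_fps a b)) $ n
     = (\<Sum>k=0..n. of_nat (n choose k) * a ^ k * b ^ (n - k) * h $ k)"
proof -
  have truncate: "(h oo euler_fps a b) $ k = (\<Sum>i=0..n. fps_const (h $ i) * euler_fps a b ^ i) $ k"
    if "k \<le> n" for k
  proof -
    have "(h oo euler_fps a b) $ k = (\<Sum>i=0..k. h $ i * (euler_fps a b ^ i) $ k)"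
      by (rule fps_compose_nth)
    also have "\<dots> = (\<Sum>i=0..n. h $ i * (euler_fps a b ^ i) $ k)"
      by (rule sum.mono_neutral_left) (use that in \<open>auto simp: euler_fps_power fps_X_power_mult_nth\<close>)
    finally show ?thesis
      by (simp add: fps_sum_nth)
  qed
  have power_coeff: "(geom_fps b * euler_fps a b ^ i) $ n = of_nat (n choose i) * a ^ i * b ^ (n - i)" for i
  proof -
    have "geom_fps b * euler_fps a b ^ i = fps_X ^ i * (fps_const (a ^ i) * geom_fps b ^ Suc i)"
      by (simp add: euler_fps_power mult_ac)
    then show ?thesis
      by (auto simp: fps_X_power_mult_nth geom_fps_power_nth binomial_eq_0 simp del: power_Suc)
  qed
  have "(geom_fps b * (h oo euler_fps a b)) $ n
      = (geom_fps b * (\<Sum>i=0..n. fps_const (h $ i) * euler_fps a b ^ i)) $ n"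
    unfolding fps_mult_nth by (intro sum.cong refl) (simp add: truncate)
  also have "\<dots> = (\<Sum>i=0..n. h $ i * (geom_fps b * euler_fps a b ^ i) $ n)"
    by (simp add: sum_distrib_left fps_sum_nth mult.left_commute[of "geom_fps b"])
  finally show ?thesis
    by (simp add: power_coeff algebra_simps)
qed

text \<open>Both sides are inverse to \<open>1 - a z / (1 - b z) = (1 - (a + b) z) / (1 - b z)\<close>.\<close>
lemma geom_fps_compose_euler:
  fixes a b :: "'a::idom"
  shows "geom_fps 1 oo euler_fps a b = geom_fps (a + b) * (1 - fps_const b * fps_X)"
proof -
  have "(geom_fps 1 oo euler_fps a b) * (1 - euler_fps a b) = (geom_fps 1 * (1 - fps_X)) oo euler_fps a b"
    by (simp add: fps_compose_mult_distrib fps_compose_sub_distrib)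
  also have "geom_fps 1 * (1 - fps_X) = (1 :: 'a fps)"
    using geom_fps_times_one_minus[of "1 :: 'a"] by simp
  finally have inv: "(geom_fps 1 oo euler_fps a b) * (1 - fps_const a * fps_X * geom_fps b) = 1"
    by (simp add: euler_fps_def)
  have "geom_fps b * (1 - fps_const b * fps_X) = 1"
    "geom_fps (a + b) * (1 - fps_const (a + b) * fps_X) = 1"
    by (rule geom_fps_times_one_minus)+
  moreover have "fps_const (a + b) = fps_const a + fps_const b"
    by simp
  ultimately show ?thesis
    using inv by algebra
qed

text \<open>Both sides vanish at \<open>0\<close> and have the same derivative.\<close>
lemma neg_ln_fps_compose_euler:
  "neg_ln_fps oo euler_fps a b
     = (neg_ln_fps oo fps_const (a + b) * fps_X) - (neg_ln_fps oo fps_const b * fps_X)"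
proof -
  have "fps_deriv (euler_fps a b)
      = fps_const a * geom_fps b + fps_const a * fps_X * (fps_const b * geom_fps b ^ 2)"
    by (simp add: euler_fps_def geom_fps_deriv algebra_simps)
  then have "fps_deriv (neg_ln_fps oo euler_fps a b)
      = geom_fps (a + b) * (1 - fps_const b * fps_X)
        * (fps_const a * geom_fps b + fps_const a * fps_X * (fps_const b * geom_fps b ^ 2))"
    by (simp add: fps_compose_deriv neg_ln_fps_deriv geom_fps_compose_euler)
  moreover have "geom_fps b * (1 - fps_const b * fps_X) = 1"
    "geom_fps (a + b) * (1 - fps_const (a + b) * fps_X) = 1"
    by (rule geom_fps_times_one_minus)+
  moreover have "fps_const (a + b) = fps_const a + fps_const b"
    by simp
  ultimately have "fps_deriv (neg_ln_fps oo euler_fps a b)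
      = fps_deriv ((neg_ln_fps oo fps_const (a + b) * fps_X) - (neg_ln_fps oo fps_const b * fps_X))"
    unfolding fps_deriv_sub neg_ln_fps_compose_linear_deriv by algebra
  then show ?thesis
    by (subst (asm) fps_deriv_eq_iff) simp
qed

definition harmonic_tuples :: "nat \<Rightarrow> nat \<Rightarrow> (nat \<Rightarrow> nat) set" where
  "harmonic_tuples n m = {k \<in> {0..<m} \<rightarrow>\<^sub>E {1..n}. (\<Sum>i<m. k i) \<le> n}"

lemma H_eq_sum_harmonic_tuples: "H n m = (\<Sum>k\<in>harmonic_tuples n m. 1 / (\<Prod>i<m. of_nat (k i)))"
  by (simp add: H_def harmonic_tuples_def)

lemma finite_harmonic_tuples: "finite (harmonic_tuples n m)"
  unfolding harmonic_tuples_def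
  by (rule finite_subset[OF _ finite_PiE[of "{0..<m}" "\<lambda>_. {1..n}"]]) auto

lemma fun_upd_in_harmonic_tuples:
  assumes "j \<in> {1..n}" and "k \<in> harmonic_tuples (n - j) m"
  shows "k(m := j) \<in> harmonic_tuples n (Suc m)"
proof -
  have k: "k \<in> {0..<m} \<rightarrow>\<^sub>E {1..n - j}" and sum_k: "(\<Sum>i<m. k i) \<le> n - j"
    using assms(2) by (auto simp: harmonic_tuples_def)
  have "(\<Sum>i<Suc m. (k(m := j)) i) = (\<Sum>i<m. k i) + j"
    by (simp add: lessThan_Suc)
  moreover have "k(m := j) \<in> {0..<Suc m} \<rightarrow>\<^sub>E {1..n}"
    using k assms(1) by (auto simp: PiE_def Pi_def extensional_def less_Suc_eq)
  moreover have "(\<Sum>i<m. k i) + j \<le> n"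
    using sum_k assms(1) by auto
  ultimately show ?thesis
    by (simp add: harmonic_tuples_def)
qed

lemma restrict_in_harmonic_tuples:
  assumes "k \<in> harmonic_tuples n (Suc m)"
  shows "k m \<in> {1..n}" and "restrict k {0..<m} \<in> harmonic_tuples (n - k m) m"
proof -
  have k: "k \<in> {0..<Suc m} \<rightarrow>\<^sub>E {1..n}" and sum_k: "(\<Sum>i<m. k i) + k m \<le> n"
    using assms by (auto simp: harmonic_tuples_def lessThan_Suc add.commute)
  show "k m \<in> {1..n}"
    using k by auto
  have "restrict k {0..<m} i \<in> {1..n - k m}" if "i \<in> {0..<m}" for i
  proof -
    have "k i \<le> (\<Sum>i<m. k i)"
      using that by (intro member_le_sum) auto
    moreover have "k i \<ge> 1"
      using k that by auto
    ultimately show ?thesis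
      using sum_k that by auto
  qed
  then show "restrict k {0..<m} \<in> harmonic_tuples (n - k m) m"
    using sum_k by (auto simp: harmonic_tuples_def)
qed

lemma bij_betw_harmonic_tuples_Suc:
  "bij_betw (\<lambda>(j, k). k(m := j)) (SIGMA j:{1..n}. harmonic_tuples (n - j) m) (harmonic_tuples n (Suc m))"
proof (rule bij_betw_byWitness[where f' = "\<lambda>k. (k m, restrict k {0..<m})"])
  show "\<forall>x\<in>(SIGMA j:{1..n}. harmonic_tuples (n - j) m). (\<lambda>k. (k m, restrict k {0..<m})) ((\<lambda>(j, k). k(m := j)) x) = x"
    by (auto simp: harmonic_tuples_def fun_eq_iff PiE_def extensional_def)
  show "\<forall>k\<in>harmonic_tuples n (Suc m). (\<lambda>(j, k). k(m := j)) ((\<lambda>k. (k m, restrict k {0..<m})) k) = k"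
    by (auto simp: harmonic_tuples_def fun_eq_iff PiE_def extensional_def)
qed (auto intro: fun_upd_in_harmonic_tuples dest: restrict_in_harmonic_tuples)

lemma H_Suc: "H n (Suc m) = (\<Sum>j=1..n. 1 / of_nat j * H (n - j) m)"
proof -
  have "H n (Suc m) = (\<Sum>x\<in>(SIGMA j:{1..n}. harmonic_tuples (n - j) m).
      1 / (\<Prod>i<Suc m. of_nat (((\<lambda>(j, k). k(m := j)) x) i)))"
    unfolding H_eq_sum_harmonic_tuples
    by (rule sum.reindex_bij_betw[OF bij_betw_harmonic_tuples_Suc, symmetric])
  also have "\<dots> = (\<Sum>(j, k)\<in>(SIGMA j:{1..n}. harmonic_tuples (n - j) m).
      1 / of_nat j * (1 / (\<Prod>i<m. of_nat (k i))))"
    by (intro sum.cong refl) (auto simp: lessThan_Suc)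
  also have "\<dots> = (\<Sum>j=1..n. \<Sum>k\<in>harmonic_tuples (n - j) m. 1 / of_nat j * (1 / (\<Prod>i<m. of_nat (k i))))"
    by (rule sum.Sigma[symmetric]) (auto simp: finite_harmonic_tuples)
  finally show ?thesis
    by (simp add: H_eq_sum_harmonic_tuples sum_distrib_left)
qed

lemma H_0: "H n 0 = 1"
proof -
  have "harmonic_tuples n 0 = {\<lambda>_. undefined}"
    by (auto simp: harmonic_tuples_def)
  then show ?thesis
    by (simp add: H_eq_sum_harmonic_tuples)
qed

lemma H_eq_fps_nth: "H n m = (neg_ln_fps ^ m * geom_fps 1) $ n"
proof (induction m arbitrary: n)
  case 0
  then show ?case by (simp add: H_0)
next
  case (Suc m)
  have "(neg_ln_fps ^ Suc m * geom_fps 1) $ n = (\<Sum>i=0..n. neg_ln_fps $ i * H (n - i) m)"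
    by (simp add: fps_mult_nth Suc mult.assoc)
  also have "\<dots> = (\<Sum>i=1..n. neg_ln_fps $ i * H (n - i) m)"
    by (simp add: sum.atLeast_Suc_atMost)
  also have "\<dots> = H n (Suc m)"
    unfolding H_Suc by (intro sum.cong refl) (simp add: neg_ln_fps_def)
  finally show ?case ..
qed

lemma S_eq_fps_nth:
  "S n a b m = (((neg_ln_fps oo fps_const (a + b) * fps_X) - (neg_ln_fps oo fps_const b * fps_X)) ^ m
                * geom_fps (a + b)) $ n"
proof -
  have "S n a b m = (geom_fps b * ((neg_ln_fps ^ m * geom_fps 1) oo euler_fps a b)) $ n"
    unfolding euler_transform_nth S_def H_eq_fps_nth ..
  also have "geom_fps b * ((neg_ln_fps ^ m * geom_fps 1) oo euler_fps a b)
      = (neg_ln_fps oo euler_fps a b) ^ m * (geom_fps b * (geom_fps 1 oo euler_fps a b))"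
    by (simp add: fps_compose_mult_distrib fps_compose_power mult_ac)
  also have "geom_fps b * (geom_fps 1 oo euler_fps a b) = geom_fps (a + b)"
    unfolding geom_fps_compose_euler using geom_fps_times_one_minus[of b] by (simp add: mult_ac)
  finally show ?thesis
    by (simp add: neg_ln_fps_compose_euler)
qed

lemma neg_ln_fps_linear_power_times_geom_nth:
  "((neg_ln_fps oo fps_const c * fps_X) ^ j * geom_fps c) $ k = c ^ k * H k j"
proof -
  have "(neg_ln_fps oo fps_const c * fps_X) ^ j * geom_fps c = (neg_ln_fps ^ j * geom_fps 1) oo fps_const c * fps_X"
    by (simp add: fps_compose_mult_distrib fps_compose_power geom_fps_compose_linear)
  then show ?thesis
    by (simp add: fps_compose_linear H_eq_fps_nth)
qed

lemma minus_fps_power_nth: "((- f :: 'a::comm_ring_1 fps) ^ r) $ i = (- 1) ^ r * (f ^ r) $ i"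
proof -
  have "(- f) ^ r = fps_const ((- 1) ^ r) * f ^ r"
    by (induction r) (simp_all flip: fps_const_neg fps_const_mult)
  then show ?thesis
    by simp
qed

lemma s1_sign: "(-1) ^ i * s1 i r = (-1) ^ r * of_nat (stirling i r)"
proof (cases "r \<le> i")
  case True
  then obtain d where i: "i = r + d"
    using le_Suc_ex by blast
  have "(-1::complex) ^ i * (-1) ^ (i - r) = (-1) ^ r * ((-1) ^ d * (-1) ^ d)"
    by (simp add: i power_add)
  also have "\<dots> = (-1) ^ r"
    by (simp add: power_add[symmetric] flip: mult_2)
  finally show ?thesis
    by (simp add: s1_def mult.assoc[symmetric])
qed (simp add: s1_def)

lemma minus_neg_ln_fps_linear_power_nth:
  "((- (neg_ln_fps oo fps_const b * fps_X)) ^ r) $ i = fact r / fact i * (-1) ^ i * b ^ i * s1 i r"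
proof -
  have "(neg_ln_fps oo fps_const b * fps_X) ^ r = neg_ln_fps ^ r oo fps_const b * fps_X"
    by (simp add: fps_compose_power)
  then have "((- (neg_ln_fps oo fps_const b * fps_X)) ^ r) $ i = (-1) ^ r * b ^ i * (neg_ln_fps ^ r) $ i"
    by (simp add: minus_fps_power_nth fps_compose_linear)
  also have "\<dots> = fact r / fact i * b ^ i * ((-1) ^ r * of_nat (stirling i r))"
    by (simp add: neg_ln_fps_power_nth)
  also have "\<dots> = fact r / fact i * b ^ i * ((-1) ^ i * s1 i r)"
    by (simp only: s1_sign)
  finally show ?thesis
    by (simp only: mult_ac)
qed

lemma binomial_expansion_term_nth:
  "((neg_ln_fps oo fps_const (a + b) * fps_X) ^ j * geom_fps (a + b)
      * (- (neg_ln_fps oo fps_const b * fps_X)) ^ r) $ n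
     = (\<Sum>k=0..n. H k j * (a + b) ^ k * (fact r / fact (n - k)) *
          (-1) ^ (n - k) * b ^ (n - k) * s1 (n - k) r)"
  unfolding fps_mult_nth[of "_ * geom_fps (a + b)"] neg_ln_fps_linear_power_times_geom_nth
    minus_neg_ln_fps_linear_power_nth
  by (intro sum.cong refl) (simp add: mult_ac)

theorem theorem1:
  fixes a b :: complex and m n :: nat
  shows "S n a b m =
    (\<Sum>j=0..m. of_nat (m choose j) *
       (\<Sum>k=0..n. H k j * (a + b) ^ k * (fact (m - j) / fact (n - k)) *
          (-1) ^ (n - k) * b ^ (n - k) * s1 (n - k) (m - j)))"
proof -
  define P where "P = neg_ln_fps oo fps_const (a + b) * fps_X"
  define Q where "Q = - (neg_ln_fps oo fps_const b * fps_X)"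
  have of_nat_times_nth: "(of_nat c * f) $ k = of_nat c * f $ k" for c k and f :: "complex fps"
    by (metis fps_mult_left_const_nth fps_of_nat)
  have "S n a b m = ((P + Q) ^ m * geom_fps (a + b)) $ n"
    by (simp add: S_eq_fps_nth P_def Q_def)
  also have "\<dots> = (\<Sum>j=0..m. of_nat (m choose j) * (P ^ j * geom_fps (a + b) * Q ^ (m - j)) $ n)"
    unfolding binomial_ring sum_distrib_right fps_sum_nth atLeast0AtMost
    by (intro sum.cong refl) (simp only: mult.assoc of_nat_times_nth, simp add: mult_ac)
  finally show ?thesis
    unfolding P_def Q_def binomial_expansion_term_nth .
qed

end
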